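(* In any execution of $\mathcal{U}$, suppose $S$ stores operation $o$ at time $T$ and stores operation $o'$ at time $T' > T$. If $o \neq o'$ then $o$ is done at time $T'$.
   Context: Model: an asynchronous shared-memory system with possibly infinitely many processes, any of which may crash, communicating via atomic shared objects. A fetch-and-increment (F\&I) object stores an integer; F\&I$(C)$ atomically returns the current value and increments it. A generalized-compare-and-swap (GCAS) object $O$ stores a value and supports Read$(O)$ and GCAS$(c, O, v_1, v_2)$, which atomically does: if $c(\text{current value of } O, v_1)$ holds then set $O := v_2$ and return true, else return false. Tuples are compared componentwise for $=$; GCAS$(>, A, (t,-,-), v)$ succeeds iff the time field of $A$ is strictly greater than $t$. Implemented type $\mathcal{T} = (OP, RES, Q, \delta)$ with initial state $s_0$; a procedure $apply_{\mathcal{T}}(o,s)$ returns some $(s',r)$ with $(s,o,s',r)\in\delta$. $NULL$ is a value different from every response of $\mathcal{T}$, and $NOOP$ is a name different from every operation of $\mathcal{T}$. Algorithm $\mathcal{U}$: each process $p$ owns a GCAS object $H_p$ with fields $(time, response)$. Shared objects: F\&I object $C$, initially $1$; GCAS object $A$ with fields $(time, op, ptr)$, initially $(0, NOOP, h(NOOP))$, where $h(NOOP)$ is a pointer to an immutable location containing $(0,\perp)$; GCAS object $S$ with fields $(time, state, response, ptr)$, initially $(0, s_0, \perp, h(NOOP))$. Process $p$ performs operation $o$ by calling DoOp$(o)$: (1) DoOp$(o)$ invoked; (2) $t := $ F\&I$(C)$; (3) $H_p := (t, NULL)$; (4) while $H_p = (t, NULL)$ do: (5) $(t^*, s^*, r^*,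 roptr^* ) := S$; (6) GCAS$(=, *roptr^*, (t^*, NULL), (t^*, r^* ))$; (7) GCAS$(>, A, (t,-,-), (t, o, \&H_p))$; (8) $(t', o', roptr') := A$; (9) $(\hat t, \hat r) := *roptr'$; (10) if $(\hat t,\hat r) = (t', NULL)$ then (11) $(s', r') := apply_{\mathcal{T}}(o', s^* )$; (12) GCAS$(=, S, (t^*,s^*,r^*,roptr^* ), (t', s', r', roptr'))$; (13) else GCAS$(=, A, (t', o', roptr'), (t, o, \&H_p))$; end while; (14) return $H_p.response$. Notation: an "operation" $o$ means one invocation of DoOp$(o)$ (or the initial $NOOP$). $p(o)$ is the process executing it; $t(o)$ is the value returned by its F\&I at line 2, or $\infty$ if line 2 has not been executed; $h(o)$ is $H_{p(o)}$. For $NOOP$: $t(NOOP)=0$ and $h(NOOP)$ is the immutable location containing $(0,\perp)$. Operation $o$ is done at time $T$ if at some time $T'\le T$, $h(o) = (t(o), r)$ with $r \neq NULL$. "Operation $o$ is stored in $S$" at a time means $S = (t(o), -, r, h(o))$ for some $r$ at that time (at every time exactly one operation is stored in $S$). *)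

theory Defs
  imports Main
begin

text \<open>Processes range over an arbitrary (possibly infinite) type 'p; crashes are modelled by
  processes simply taking no further steps (arbitrary interleavings).\<close>

datatype 'r rv = Null | Bot | Val 'r
datatype 'o opv = NOOP | Op 'o
datatype 'p ptr = HNoop | HP 'p             \<comment> \<open>h(NOOP) or &H_p\<close>
datatype pcv = Idle | L2 | L3 | L4 | L5 | L6 | L7 | L8 | L9 | L10 | L11 | L12 | L13 | L14

record ('o,'r,'st,'p) lstate =
  lpc :: pcv
  lop :: 'o
  lt  :: nat
  lts :: nat
  lss :: 'st
  lrs :: "'r rv"
  lps :: "'p ptr"
  ltA :: nat
  loA :: "'o opv"
  lpA :: "'p ptr"
  lth :: nat
  lrh :: "'r rv"
  lsn :: 'st
  lrn :: 'r

record ('o,'r,'st,'p) config =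
  C :: nat
  A :: "nat \<times> 'o opv \<times> 'p ptr"
  S :: "nat \<times> 'st \<times> 'r rv \<times> 'p ptr"
  H :: "'p \<Rightarrow> nat \<times> 'r rv"
  L :: "'p \<Rightarrow> ('o,'r,'st,'p) lstate"

definition setL :: "('o,'r,'st,'p) config \<Rightarrow> 'p \<Rightarrow> ('o,'r,'st,'p) lstate \<Rightarrow> ('o,'r,'st,'p) config" where
  "setL c p l = c\<lparr>L := (L c)(p := l)\<rparr>"

definition deref :: "('o,'r,'st,'p) config \<Rightarrow> 'p ptr \<Rightarrow> nat \<times> 'r rv" where
  "deref c x = (case x of HNoop \<Rightarrow> (0, Bot) | HP q \<Rightarrow> H c q)"

text \<open>One atomic step of process p. delta is the transition relation of T:
  (s, o, s', r) \<in> delta.\<close>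
definition step :: "('st \<times> 'o \<times> 'st \<times> 'r) set \<Rightarrow> 'p \<Rightarrow> ('o,'r,'st,'p) config \<Rightarrow> ('o,'r,'st,'p) config \<Rightarrow> bool" where
  "step \<delta> p c c' = (let l = L c p in case lpc l of
     Idle \<Rightarrow> (\<exists>ob. c' = setL c p (l\<lparr>lpc := L2, lop := ob\<rparr>))
   | L2 \<Rightarrow> c' = (setL c p (l\<lparr>lpc := L3, lt := C c\<rparr>))\<lparr>C := Suc (C c)\<rparr>
   | L3 \<Rightarrow> c' = (setL c p (l\<lparr>lpc := L4\<rparr>))\<lparr>H := (H c)(p := (lt l, Null))\<rparr>
   | L4 \<Rightarrow> c' = setL c p (l\<lparr>lpc := (if H c p = (lt l, Null) then L5 else L14)\<rparr>)
   | L5 \<Rightarrow> (case S c of (a, b, d, e) \<Rightarrow>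
             c' = setL c p (l\<lparr>lpc := L6, lts := a, lss := b, lrs := d, lps := e\<rparr>))
   | L6 \<Rightarrow> c' = (let c1 = setL c p (l\<lparr>lpc := L7\<rparr>) in
             case lps l of HNoop \<Rightarrow> c1
             | HP q \<Rightarrow> (if H c q = (lts l, Null) then c1\<lparr>H := (H c)(q := (lts l, lrs l))\<rparr> else c1))
   | L7 \<Rightarrow> c' = (let c1 = setL c p (l\<lparr>lpc := L8\<rparr>) in
             if fst (A c) > lt l then c1\<lparr>A := (lt l, Op (lop l), HP p)\<rparr> else c1)
   | L8 \<Rightarrow> (case A c of (a, b, d) \<Rightarrow>
             c' = setL c p (l\<lparr>lpc := L9, ltA := a, loA := b, lpA := d\<rparr>))
   | L9 \<Rightarrow> c' = setL c p (l\<lparr>lpc := L10, lth := fst (deref c (lpA l)), lrh := snd (deref c (lpA l))\<rparr>)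
   | L10 \<Rightarrow> c' = setL c p (l\<lparr>lpc := (if (lth l, lrh l) = (ltA l, Null) then L11 else L13)\<rparr>)
   | L11 \<Rightarrow> (\<exists>ob sn rn. loA l = Op ob \<and> (lss l, ob, sn, rn) \<in> \<delta> \<and>
             c' = setL c p (l\<lparr>lpc := L12, lsn := sn, lrn := rn\<rparr>))
   | L12 \<Rightarrow> c' = (let c1 = setL c p (l\<lparr>lpc := L4\<rparr>) in
             if S c = (lts l, lss l, lrs l, lps l) then c1\<lparr>S := (ltA l, lsn l, Val (lrn l), lpA l)\<rparr> else c1)
   | L13 \<Rightarrow> c' = (let c1 = setL c p (l\<lparr>lpc := L4\<rparr>) in
             if A c = (ltA l, loA l, lpA l) then c1\<lparr>A := (lt l, Op (lop l), HP p)\<rparr> else c1)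
   | L14 \<Rightarrow> c' = setL c p (l\<lparr>lpc := Idle\<rparr>))"

definition init :: "'st \<Rightarrow> ('o,'r,'st,'p) config \<Rightarrow> bool" where
  "init s0 c = (C c = 1 \<and> A c = (0, NOOP, HNoop) \<and> S c = (0, s0, Bot, HNoop)
                \<and> (\<forall>p. H c p = (0, Bot)) \<and> (\<forall>p. lpc (L c p) = Idle))"

text \<open>An execution: configurations indexed by time; each transition is an atomic step of some
  process or a stutter (so finite executions are covered too).\<close>
definition execution :: "('st \<times> 'o \<times> 'st \<times> 'r) set \<Rightarrow> 'st \<Rightarrow> (nat \<Rightarrow> ('o,'r,'st,'p) config) \<Rightarrow> bool" where
  "execution \<delta> s0 ex = (init s0 (ex 0) \<and>
     (\<forall>i. ex (Suc i) = ex i \<or> (\<exists>p. step \<delta> p (ex i) (ex (Suc i)))))"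

text \<open>Operations: the initial NOOP, or the invocation of DoOp by process p at time i.\<close>
datatype 'p operation = NoopOp | Inv 'p nat

fun is_op :: "(nat \<Rightarrow> ('o,'r,'st,'p) config) \<Rightarrow> 'p operation \<Rightarrow> bool" where
  "is_op ex NoopOp = True"
| "is_op ex (Inv p i) = (lpc (L (ex i) p) = Idle \<and> lpc (L (ex (Suc i)) p) = L2)"

definition fi_step :: "(nat \<Rightarrow> ('o,'r,'st,'p) config) \<Rightarrow> 'p \<Rightarrow> nat \<Rightarrow> bool" where
  "fi_step ex p j = (lpc (L (ex j) p) = L2 \<and> lpc (L (ex (Suc j)) p) = L3)"

text \<open>t(o): value returned by the F\&I at line 2 (None encodes \<infinity>).\<close>
fun t_of :: "(nat \<Rightarrow> ('o,'r,'st,'p) config) \<Rightarrow> 'p operation \<Rightarrow> nat option" where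
  "t_of ex NoopOp = Some 0"
| "t_of ex (Inv p i) = (if \<exists>j>i. fi_step ex p j
       then Some (C (ex (LEAST j. i < j \<and> fi_step ex p j))) else None)"

fun h_of :: "'p operation \<Rightarrow> 'p ptr" where
  "h_of NoopOp = HNoop"
| "h_of (Inv p i) = HP p"

definition stored :: "(nat \<Rightarrow> ('o,'r,'st,'p) config) \<Rightarrow> nat \<Rightarrow> 'p operation \<Rightarrow> bool" where
  "stored ex T x = (\<exists>tt. t_of ex x = Some tt \<and> fst (S (ex T)) = tt
                        \<and> snd (snd (snd (S (ex T)))) = h_of x)"

definition is_done :: "(nat \<Rightarrow> ('o,'r,'st,'p) config) \<Rightarrow> nat \<Rightarrow> 'p operation \<Rightarrow> bool" where
  "is_done ex T x = (\<exists>T'\<le>T. \<exists>tt r. t_of ex x = Some tt \<and> deref (ex T') (h_of x) = (tt, r) \<and> r \<noteq> Null)"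

end

theory Submission
  imports Defs
begin

text \<open>Let S store o = Inv p i with timestamp t. Only the successful GCAS of line 12 changes S,
  and the process q performing it read S at line 5 and then executed the helping GCAS of line 6
  on H_p, so at that moment H_p \<noteq> (t, NULL). On the other hand, every timestamp occurring in
  A or S (or in a local copy of them) is bounded by the timestamp of the current operation of
  the process it points to, and strictly so while that process has not yet written its
  announcement at line 3. Hence when S is replaced, p has already executed line 3 of o and is
  either still inside the loop of o, where H_p can only leave (t, NULL) by being answered, or
  past it. Either way H_p has held (t, r) with r \<noteq> NULL, i.e. o is done. The hypothesis
  o \<noteq> o' guarantees that S really changes between T and T', because two invocations of the
  same process draw distinct timestamps.\<close>

lemmas step_unfold = step_def Let_def setL_def

definition ts_bounded :: "('o,'r,'st,'p) config \<Rightarrow> nat \<Rightarrow> 'p \<Rightarrow> bool" where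
  "ts_bounded c t p \<longleftrightarrow> t < C c
     \<and> (lpc (L c p) \<notin> {Idle, L2} \<longrightarrow> t \<le> lt (L c p))
     \<and> (lpc (L c p) = L3 \<longrightarrow> t < lt (L c p))"

definition ptr_ts_bounded :: "('o,'r,'st,'p) config \<Rightarrow> nat \<Rightarrow> 'p ptr \<Rightarrow> bool" where
  "ptr_ts_bounded c t x \<longleftrightarrow> (\<forall>p. x = HP p \<longrightarrow> ts_bounded c t p)"

abbreviation S_snapshot_pcs :: "pcv set" where
  "S_snapshot_pcs \<equiv> {L6, L7, L8, L9, L10, L11, L12}"

abbreviation helped_pcs :: "pcv set" where
  "helped_pcs \<equiv> {L7, L8, L9, L10, L11, L12}"

abbreviation A_snapshot_pcs :: "pcv set" where
  "A_snapshot_pcs \<equiv> {L9, L10, L11, L12, L13}"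

abbreviation loop_pcs :: "pcv set" where
  "loop_pcs \<equiv> {L4, L5, L6, L7, L8, L9, L10, L11, L12, L13}"

lemma step_L_other: "step \<delta> q c c' \<Longrightarrow> p \<noteq> q \<Longrightarrow> L c' p = L c p"
  by (cases "lpc (L c q)") (auto simp: step_unfold split: prod.splits ptr.splits if_splits)

lemma step_C_mono: "step \<delta> q c c' \<Longrightarrow> C c \<le> C c'"
  by (cases "lpc (L c q)") (auto simp: step_unfold split: prod.splits ptr.splits if_splits)

lemma step_L2: "step \<delta> p c c' \<Longrightarrow> lpc (L c p) = L2 \<Longrightarrow>
    lpc (L c' p) = L3 \<and> C c' = Suc (C c) \<and> lt (L c' p) = C c"
  by (auto simp: step_unfold)

lemma step_A_cases: "step \<delta> q c c' \<Longrightarrow> A c' = A c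
    \<or> (lpc (L c q) \<in> {L7, L13} \<and> A c' = (lt (L c q), Op (lop (L c q)), HP q))"
  by (cases "lpc (L c q)") (auto simp: step_unfold split: prod.splits ptr.splits if_splits)

lemma step_S_cases: "step \<delta> q c c' \<Longrightarrow> S c' = S c
    \<or> (lpc (L c q) = L12 \<and> S c = (lts (L c q), lss (L c q), lrs (L c q), lps (L c q))
       \<and> S c' = (ltA (L c q), lsn (L c q), Val (lrn (L c q)), lpA (L c q)))"
  by (cases "lpc (L c q)") (auto simp: step_unfold split: prod.splits ptr.splits if_splits)

lemma step_H_cases: "step \<delta> q c c' \<Longrightarrow> H c' p = H c p
    \<or> (lpc (L c q) = L3 \<and> p = q \<and> H c' p = (lt (L c q), Null))
    \<or> (lpc (L c q) = L6 \<and> lps (L c q) = HP p \<and> H c p = (lts (L c q), Null)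
       \<and> H c' p = (lts (L c q), lrs (L c q)))"
  by (cases "lpc (L c q)") (auto simp: step_unfold split: prod.splits ptr.splits if_splits)

lemma step_S_snapshot_cases: "step \<delta> q c c' \<Longrightarrow> lpc (L c' q) \<in> S_snapshot_pcs \<Longrightarrow>
    (lpc (L c q) = L5 \<and> S c = (lts (L c' q), lss (L c' q), lrs (L c' q), lps (L c' q)))
  \<or> (lpc (L c q) \<in> S_snapshot_pcs \<and> lts (L c' q) = lts (L c q) \<and> lps (L c' q) = lps (L c q)
     \<and> lrs (L c' q) = lrs (L c q))"
  by (cases "lpc (L c q)") (auto simp: step_unfold split: prod.splits ptr.splits if_splits)

lemma step_helped_cases: "step \<delta> q c c' \<Longrightarrow> lpc (L c' q) \<in> helped_pcs \<Longrightarrow>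
    lpc (L c q) \<in> S_snapshot_pcs \<and> lts (L c' q) = lts (L c q) \<and> lps (L c' q) = lps (L c q)
    \<and> lrs (L c' q) = lrs (L c q)"
  by (cases "lpc (L c q)") (auto simp: step_unfold split: prod.splits ptr.splits if_splits)

lemma step_A_snapshot_cases: "step \<delta> q c c' \<Longrightarrow> lpc (L c' q) \<in> A_snapshot_pcs \<Longrightarrow>
    (lpc (L c q) = L8 \<and> A c = (ltA (L c' q), loA (L c' q), lpA (L c' q)))
  \<or> (lpc (L c q) \<in> A_snapshot_pcs \<and> ltA (L c' q) = ltA (L c q) \<and> lpA (L c' q) = lpA (L c q))"
  by (cases "lpc (L c q)") (auto simp: step_unfold split: prod.splits ptr.splits if_splits)

lemma ts_bounded_step: assumes "step \<delta> q c c'" "ts_bounded c t p" shows "ts_bounded c' t p"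
proof (cases "p = q")
  case True
  with assms show ?thesis
    by (cases "lpc (L c q)") (auto simp: ts_bounded_def step_unfold split: prod.splits ptr.splits if_splits)
next
  case False
  with assms step_L_other[OF assms(1) False] step_C_mono[OF assms(1)] show ?thesis
    unfolding ts_bounded_def by auto
qed

lemma ptr_ts_bounded_step: "step \<delta> q c c' \<Longrightarrow> ptr_ts_bounded c t x \<Longrightarrow> ptr_ts_bounded c' t x"
  unfolding ptr_ts_bounded_def using ts_bounded_step by metis

section \<open>The invariant\<close>

definition A_inv :: "('o,'r,'st,'p) config \<Rightarrow> bool" where
  "A_inv c \<longleftrightarrow> ptr_ts_bounded c (fst (A c)) (snd (snd (A c)))"

definition S_inv :: "('o,'r,'st,'p) config \<Rightarrow> bool" where
  "S_inv c \<longleftrightarrow> ptr_ts_bounded c (fst (S c)) (snd (snd (snd (S c))))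
     \<and> fst (snd (snd (S c))) \<noteq> Null"

definition S_snapshot_inv :: "('o,'r,'st,'p) config \<Rightarrow> bool" where
  "S_snapshot_inv c \<longleftrightarrow> (\<forall>q. lpc (L c q) \<in> S_snapshot_pcs \<longrightarrow>
     ptr_ts_bounded c (lts (L c q)) (lps (L c q)) \<and> lrs (L c q) \<noteq> Null)"

definition A_snapshot_inv :: "('o,'r,'st,'p) config \<Rightarrow> bool" where
  "A_snapshot_inv c \<longleftrightarrow> (\<forall>q. lpc (L c q) \<in> A_snapshot_pcs \<longrightarrow>
     ptr_ts_bounded c (ltA (L c q)) (lpA (L c q)))"

definition helped_inv :: "('o,'r,'st,'p) config \<Rightarrow> bool" where
  "helped_inv c \<longleftrightarrow> (\<forall>q p. lpc (L c q) \<in> helped_pcs \<and> lps (L c q) = HP p \<longrightarrow>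
     H c p \<noteq> (lts (L c q), Null))"

definition issued_inv :: "('o,'r,'st,'p) config \<Rightarrow> bool" where
  "issued_inv c \<longleftrightarrow> (\<forall>p. lpc (L c p) \<notin> {Idle, L2} \<longrightarrow> lt (L c p) < C c)"

definition invariant :: "('o,'r,'st,'p) config \<Rightarrow> bool" where
  "invariant c \<longleftrightarrow> A_inv c \<and> S_inv c \<and> S_snapshot_inv c \<and> A_snapshot_inv c
     \<and> helped_inv c \<and> issued_inv c"

lemma invariant_init: "init s0 c \<Longrightarrow> invariant c"
  by (auto simp: init_def invariant_def A_inv_def S_inv_def S_snapshot_inv_def A_snapshot_inv_def
      helped_inv_def issued_inv_def ptr_ts_bounded_def)

lemma issued_inv_step: assumes st: "step \<delta> q c c'" and i: "issued_inv c" shows "issued_inv c'"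
  unfolding issued_inv_def
proof (intro allI impI)
  fix p assume h: "lpc (L c' p) \<notin> {Idle, L2}"
  show "lt (L c' p) < C c'"
  proof (cases "p = q")
    case False
    then show ?thesis using h i step_L_other[OF st False] step_C_mono[OF st]
      unfolding issued_inv_def by (metis order_less_le_trans)
  next
    case True
    then show ?thesis using h i st unfolding issued_inv_def
      by (cases "lpc (L c q)") (auto simp: step_unfold split: prod.splits ptr.splits if_splits)
  qed
qed

lemma A_inv_step: assumes st: "step \<delta> q c c'" and i: "invariant c" shows "A_inv c'"
  using step_A_cases[OF st]
proof
  assume "A c' = A c"
  then show ?thesis using i ptr_ts_bounded_step[OF st] unfolding invariant_def A_inv_def by simp
next
  assume h: "lpc (L c q) \<in> {L7, L13} \<and> A c' = (lt (L c q), Op (lop (L c q)), HP q)"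
  then have "lt (L c q) < C c" using i unfolding invariant_def issued_inv_def by auto
  with h have "ptr_ts_bounded c (lt (L c q)) (HP q)"
    unfolding ptr_ts_bounded_def ts_bounded_def by auto
  then show ?thesis using h ptr_ts_bounded_step[OF st] unfolding A_inv_def by simp
qed

lemma S_inv_step: assumes st: "step \<delta> q c c'" and i: "invariant c" shows "S_inv c'"
  using step_S_cases[OF st]
proof
  assume "S c' = S c"
  then show ?thesis using i ptr_ts_bounded_step[OF st] unfolding invariant_def S_inv_def by simp
next
  assume h: "lpc (L c q) = L12 \<and> S c = (lts (L c q), lss (L c q), lrs (L c q), lps (L c q))
    \<and> S c' = (ltA (L c q), lsn (L c q), Val (lrn (L c q)), lpA (L c q))"
  then have "ptr_ts_bounded c (ltA (L c q)) (lpA (L c q))"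
    using i unfolding invariant_def A_snapshot_inv_def by auto
  then show ?thesis using h ptr_ts_bounded_step[OF st] unfolding S_inv_def by simp
qed

lemma S_snapshot_inv_step: assumes st: "step \<delta> q c c'" and i: "invariant c"
  shows "S_snapshot_inv c'"
  unfolding S_snapshot_inv_def
proof (intro allI impI)
  fix p assume h: "lpc (L c' p) \<in> S_snapshot_pcs"
  show "ptr_ts_bounded c' (lts (L c' p)) (lps (L c' p)) \<and> lrs (L c' p) \<noteq> Null"
  proof (cases "p = q")
    case False
    then show ?thesis using h i step_L_other[OF st False] ptr_ts_bounded_step[OF st]
      unfolding invariant_def S_snapshot_inv_def by metis
  next
    case True
    from step_S_snapshot_cases[OF st h[unfolded True]] show ?thesis
    proof
      assume "lpc (L c q) = L5 \<and> S c = (lts (L c' q), lss (L c' q), lrs (L c' q), lps (L c' q))"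
      then show ?thesis using True i ptr_ts_bounded_step[OF st]
        unfolding invariant_def S_inv_def by auto
    next
      assume "lpc (L c q) \<in> S_snapshot_pcs \<and> lts (L c' q) = lts (L c q)
        \<and> lps (L c' q) = lps (L c q) \<and> lrs (L c' q) = lrs (L c q)"
      then show ?thesis using True i ptr_ts_bounded_step[OF st]
        unfolding invariant_def S_snapshot_inv_def by metis
    qed
  qed
qed

lemma A_snapshot_inv_step: assumes st: "step \<delta> q c c'" and i: "invariant c"
  shows "A_snapshot_inv c'"
  unfolding A_snapshot_inv_def
proof (intro allI impI)
  fix p assume h: "lpc (L c' p) \<in> A_snapshot_pcs"
  show "ptr_ts_bounded c' (ltA (L c' p)) (lpA (L c' p))"
  proof (cases "p = q")
    case False
    then show ?thesis using h i step_L_other[OF st False] ptr_ts_bounded_step[OF st]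
      unfolding invariant_def A_snapshot_inv_def by metis
  next
    case True
    from step_A_snapshot_cases[OF st h[unfolded True]] show ?thesis
    proof
      assume "lpc (L c q) = L8 \<and> A c = (ltA (L c' q), loA (L c' q), lpA (L c' q))"
      then show ?thesis using True i ptr_ts_bounded_step[OF st]
        unfolding invariant_def A_inv_def by auto
    next
      assume "lpc (L c q) \<in> A_snapshot_pcs \<and> ltA (L c' q) = ltA (L c q)
        \<and> lpA (L c' q) = lpA (L c q)"
      then show ?thesis using True i ptr_ts_bounded_step[OF st]
        unfolding invariant_def A_snapshot_inv_def by metis
    qed
  qed
qed

text \<open>The only step that can reset H_p to (t, NULL) is p's own line 3, and then t exceeds
  every timestamp pointing to p that a helper may hold.\<close>

lemma helped_inv_step: assumes st: "step \<delta> q c c'" and i: "invariant c" shows "helped_inv c'"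
  unfolding helped_inv_def
proof (intro allI impI)
  fix q' p assume h: "lpc (L c' q') \<in> helped_pcs \<and> lps (L c' q') = HP p"
  show "H c' p \<noteq> (lts (L c' q'), Null)"
  proof (cases "q' = q \<and> lpc (L c q) = L6")
    case True
    then have e: "lts (L c' q') = lts (L c q)" "lps (L c q) = HP p" "lrs (L c q) \<noteq> Null"
      using step_helped_cases[OF st] h i unfolding invariant_def S_snapshot_inv_def by auto
    from step_H_cases[OF st, of p] show ?thesis
    proof (elim disjE)
      assume unchanged: "H c' p = H c p"
      have "H c p \<noteq> (lts (L c q), Null)" using True st e unchanged by (auto simp: step_unfold)
      then show ?thesis using e unchanged by simp
    qed (use e True in auto)
  next
    case False
    then have old: "lpc (L c q') \<in> helped_pcs \<and> lts (L c' q') = lts (L c q')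
        \<and> lps (L c' q') = lps (L c q')"
      using h step_helped_cases[OF st] step_L_other[OF st] by (cases "q' = q") auto
    then have unhelped: "H c p \<noteq> (lts (L c q'), Null)"
      using h i unfolding invariant_def helped_inv_def by auto
    have "ptr_ts_bounded c (lts (L c q')) (HP p)"
      using old h i unfolding invariant_def S_snapshot_inv_def by auto
    then have bound: "ts_bounded c (lts (L c q')) p" unfolding ptr_ts_bounded_def by simp
    from step_H_cases[OF st, of p] show ?thesis
    proof (elim disjE)
      assume "lpc (L c q) = L3 \<and> p = q \<and> H c' p = (lt (L c q), Null)"
      then show ?thesis using bound old unfolding ts_bounded_def by auto
    qed (use unhelped old i in \<open>auto simp: invariant_def S_snapshot_inv_def\<close>)
  qed
qed

lemma invariant_step: "step \<delta> q c c' \<Longrightarrow> invariant c \<Longrightarrow> invariant c'"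
  by (meson invariant_def A_inv_step S_inv_step S_snapshot_inv_step A_snapshot_inv_step
      helped_inv_step issued_inv_step)

lemma nat_transition_point:
  assumes "P a" "\<not> P b" "a \<le> b"
  obtains k where "a \<le> k" "k < b" "P k" "\<not> P (Suc k)"
  using assms(3,2)
proof (induction b rule: dec_induct)
  case base
  then show ?case using assms(1) by simp
next
  case (step b)
  then show ?case by (metis le_SucI lessI less_SucI)
qed

lemma execution_step:
  "execution \<delta> s0 ex \<Longrightarrow> ex (Suc i) = ex i \<or> (\<exists>q. step \<delta> q (ex i) (ex (Suc i)))"
  unfolding execution_def by blast

lemma execution_invariant: assumes "execution \<delta> s0 ex" shows "invariant (ex k)"
proof (induction k)
  case 0
  show ?case by (rule invariant_init[of s0]) (use assms in \<open>simp add: execution_def\<close>)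
next
  case (Suc k)
  then show ?case using execution_step[OF assms, of k] invariant_step by metis
qed

lemma execution_C_mono: assumes "execution \<delta> s0 ex" "a \<le> b" shows "C (ex a) \<le> C (ex b)"
  using assms(2)
proof (induction b rule: dec_induct)
  case (step b)
  then show ?case using execution_step[OF assms(1), of b] step_C_mono by fastforce
qed simp

lemma fi_step_effect: assumes "execution \<delta> s0 ex" "fi_step ex p j"
  shows "C (ex (Suc j)) = Suc (C (ex j)) \<and> lt (L (ex (Suc j)) p) = C (ex j)"
proof -
  have pc: "lpc (L (ex j) p) = L2" "lpc (L (ex (Suc j)) p) = L3"
    using assms(2) unfolding fi_step_def by auto
  then obtain q where st: "step \<delta> q (ex j) (ex (Suc j))"
    using execution_step[OF assms(1), of j] by fastforce
  then have "q = p" using step_L_other[OF st, of p] pc by (metis pcv.distinct)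
  then show ?thesis using step_L2 st pc by metis
qed

lemma fi_step_C_less: assumes "execution \<delta> s0 ex" "fi_step ex p a" "a < b"
  shows "C (ex a) < C (ex b)"
  using fi_step_effect[OF assms(1,2)] execution_C_mono[OF assms(1), of "Suc a" b] assms(3) by simp

lemma L2_persists:
  assumes e: "execution \<delta> s0 ex" and "a \<le> b" and "lpc (L (ex a) p) = L2"
    and no_fi: "\<And>m. a \<le> m \<Longrightarrow> m < b \<Longrightarrow> \<not> fi_step ex p m"
  shows "lpc (L (ex b) p) = L2"
  using assms(2)
proof (induction b rule: dec_induct)
  case base
  show ?case by fact
next
  case (step m)
  show ?case
  proof (cases "ex (Suc m) = ex m")
    case False
    then obtain q where st: "step \<delta> q (ex m) (ex (Suc m))" using execution_step[OF e, of m] by blast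
    show ?thesis
    proof (cases "q = p")
      case True
      then show ?thesis using st step_L2 step.IH no_fi[of m] step.hyps unfolding fi_step_def by metis
    next
      case False
      then show ?thesis using step_L_other[OF st, of p] step.IH by simp
    qed
  qed (use step.IH in simp)
qed

lemma t_of_InvE:
  assumes "t_of ex (Inv p i) = Some t"
  obtains f where "i < f" "fi_step ex p f" "t = C (ex f)"
    "\<And>m. i < m \<Longrightarrow> m < f \<Longrightarrow> \<not> fi_step ex p m"
proof -
  define f where "f = (LEAST j. i < j \<and> fi_step ex p j)"
  have ex: "\<exists>j>i. fi_step ex p j" using assms by (auto split: if_splits)
  then have f: "i < f \<and> fi_step ex p f" unfolding f_def by (metis (mono_tags, lifting) LeastI)
  have "t = C (ex f)" using assms ex unfolding f_def by auto
  moreover have "\<not> fi_step ex p m" if "i < m" "m < f" for m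
    using not_less_Least[of m "\<lambda>j. i < j \<and> fi_step ex p j"] that unfolding f_def by blast
  ultimately show ?thesis using f that by blast
qed

text \<open>Between its invocation and its F\&I the process stays at line 2, so the later invocation
  cannot take place before the F\&I of the earlier one, which therefore returns a smaller value.\<close>

lemma Inv_ts_distinct:
  assumes e: "execution \<delta> s0 ex" and "is_op ex (Inv p i)" "is_op ex (Inv p j)" "i < j"
    and "t_of ex (Inv p i) = Some t" "t_of ex (Inv p j) = Some t"
  shows False
proof -
  obtain f1 where f1: "i < f1" "fi_step ex p f1" "t = C (ex f1)"
    and no_fi: "\<And>m. i < m \<Longrightarrow> m < f1 \<Longrightarrow> \<not> fi_step ex p m"
    using assms(5) by (elim t_of_InvE) fast
  obtain f2 where f2: "j < f2" "fi_step ex p f2" "t = C (ex f2)"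
    using assms(6) by (blast elim: t_of_InvE)
  have "f1 = f2"
    using fi_step_C_less[OF e f1(2), of f2] fi_step_C_less[OF e f2(2), of f1] f1(3) f2(3)
    by (metis less_irrefl linorder_neqE_nat)
  then have "lpc (L (ex j) p) = L2"
    using L2_persists[OF e, of "Suc i" j p] assms(2,4) f2(1) no_fi by simp
  then show False using assms(3) by simp
qed

lemma stored_unique:
  assumes "execution \<delta> s0 ex" "is_op ex o1" "is_op ex o2" "stored ex T o1" "stored ex T o2"
  shows "o1 = o2"
proof -
  obtain t where t: "t_of ex o1 = Some t" "t_of ex o2 = Some t" "h_of o1 = h_of o2"
    using assms(4,5) unfolding stored_def by auto
  show ?thesis
  proof (cases o1; cases o2)
    fix p i q j assume o: "o1 = Inv p i" "o2 = Inv q j"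
    then have "p = q" using t(3) by simp
    then show ?thesis using Inv_ts_distinct[OF assms(1)] assms(2,3) t o
      by (metis linorder_neqE_nat)
  qed (use t in auto)
qed

section \<open>Pending operations\<close>

definition pending :: "('o,'r,'st,'p) config \<Rightarrow> 'p \<Rightarrow> nat \<Rightarrow> bool" where
  "pending c p t \<longleftrightarrow> lt (L c p) = t
     \<and> (lpc (L c p) = L3 \<or> lpc (L c p) \<in> loop_pcs \<and> H c p = (t, Null))"

lemma pending_step: assumes st: "step \<delta> q c c'" and i: "invariant c" and P: "pending c p t"
  shows "pending c' p t \<or> (\<exists>r. H c' p = (t, r) \<and> r \<noteq> Null)"
proof -
  have helper_answers: "lrs (L c q) \<noteq> Null" if "lpc (L c q) = L6"
    using that i unfolding invariant_def S_snapshot_inv_def by auto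
  show ?thesis
  proof (cases "q = p")
    case True
    with st P helper_answers show ?thesis
      by (cases "lpc (L c p)") (auto simp: pending_def step_unfold split: prod.splits ptr.splits if_splits)
  next
    case False
    then have "L c' p = L c p" using step_L_other[OF st] by metis
    with step_H_cases[OF st, of p] P helper_answers False show ?thesis
      by (auto simp: pending_def)
  qed
qed

lemma pending_until_answered:
  assumes e: "execution \<delta> s0 ex" and "a \<le> b" and "pending (ex a) p t"
  shows "pending (ex b) p t \<or> (\<exists>k\<le>b. \<exists>r. H (ex k) p = (t, r) \<and> r \<noteq> Null)"
  using assms(2)
proof (induction b rule: dec_induct)
  case base
  show ?case using assms(3) by simp
next
  case (step b)
  show ?case
  proof (cases "pending (ex b) p t")
    case True
    show ?thesis
    proof (cases "ex (Suc b) = ex b")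
      case False
      then obtain q where "step \<delta> q (ex b) (ex (Suc b))" using execution_step[OF e, of b] by blast
      from pending_step[OF this execution_invariant[OF e] True] show ?thesis by blast
    qed (use True in simp)
  next
    case False
    then show ?thesis using step.IH le_SucI by blast
  qed
qed

lemma pending_or_answered:
  assumes e: "execution \<delta> s0 ex" and "t_of ex (Inv p i) = Some t" and "t < C (ex k)"
  shows "pending (ex k) p t \<or> (\<exists>k'\<le>k. \<exists>r. H (ex k') p = (t, r) \<and> r \<noteq> Null)"
proof -
  obtain f where f: "fi_step ex p f" "t = C (ex f)"
    using assms(2) by (blast elim: t_of_InvE)
  have "f < k" using execution_C_mono[OF e, of k f] f(2) assms(3) by (metis not_less)
  moreover have "pending (ex (Suc f)) p t"
    using fi_step_effect[OF e f(1)] f unfolding pending_def fi_step_def by simp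
  ultimately show ?thesis using pending_until_answered[OF e] by (metis Suc_leI)
qed

text \<open>The process replacing S executed the helping GCAS of line 6 on the pointer it found there.\<close>

lemma S_replaced_not_pending:
  assumes e: "execution \<delta> s0 ex"
    and stored: "fst (S (ex k)) = t" "snd (snd (snd (S (ex k)))) = HP p"
    and replaced: "\<not> (fst (S (ex (Suc k))) = t \<and> snd (snd (snd (S (ex (Suc k))))) = HP p)"
  shows "t < C (ex k) \<and> \<not> pending (ex k) p t"
proof -
  have i: "invariant (ex k)" by (rule execution_invariant[OF e])
  then have bound: "ts_bounded (ex k) t p"
    using stored unfolding invariant_def S_inv_def ptr_ts_bounded_def by auto
  obtain q where st: "step \<delta> q (ex k) (ex (Suc k))"
    using execution_step[OF e, of k] replaced stored by auto
  then have "lpc (L (ex k) q) = L12" "lts (L (ex k) q) = t" "lps (L (ex k) q) = HP p"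
    using step_S_cases[OF st] replaced stored by auto
  then have "H (ex k) p \<noteq> (t, Null)" using i unfolding invariant_def helped_inv_def by force
  with bound show ?thesis unfolding pending_def ts_bounded_def by auto
qed

theorem mainTheorem7:
  fixes \<delta> :: "('st \<times> 'o \<times> 'st \<times> 'r) set" and s0 :: 'st
    and ex :: "nat \<Rightarrow> ('o,'r,'st,'p) config"
    and o1 o2 :: "'p operation" and T T' :: nat
  assumes "execution \<delta> s0 ex"
    and "is_op ex o1" and "is_op ex o2"
    and "stored ex T o1" and "stored ex T' o2" and "T < T'"
    and "o1 \<noteq> o2"
  shows "is_done ex T' o1"
proof (cases o1)
  case NoopOp
  then show ?thesis by (auto simp: is_done_def deref_def)
next
  case (Inv p i)
  with assms(4) obtain t where t: "t_of ex (Inv p i) = Some t"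
    unfolding stored_def by auto
  define storing where "storing k \<longleftrightarrow> fst (S (ex k)) = t \<and> snd (snd (snd (S (ex k)))) = HP p" for k
  have "storing T" using assms(4) Inv t unfolding stored_def storing_def by auto
  moreover have "\<not> storing T'"
    using stored_unique[OF assms(1-3) _ assms(5)] assms(7) Inv t unfolding stored_def storing_def by auto
  ultimately obtain k where k: "k < T'" "storing k" "\<not> storing (Suc k)"
    using nat_transition_point[of storing T T'] assms(6) by auto
  then have "t < C (ex k) \<and> \<not> pending (ex k) p t"
    using S_replaced_not_pending[OF assms(1)] unfolding storing_def by blast
  then obtain k' r where "k' \<le> k" "H (ex k') p = (t, r)" "r \<noteq> Null"
    using pending_or_answered[OF assms(1) t] by blast
  then show ?thesis using Inv t k(1) unfolding is_done_def
    by (intro exI[of _ k']) (auto simp: deref_def)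
qed

end
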